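(* Let $(X,\widetilde{\tau},\mathfrak{a}_E,E)$ be a soft aura topological space. The collection $\widetilde{\tau}_{\mathfrak{a}}=\{(G,E)\in\mathrm{SS}(X,E):\mathrm{int}_{\mathfrak{a}}(G,E)=(G,E)\}$ is a soft topology on $X$ with parameter set $E$.
   Context: Let $X$ be a nonempty set and $E$ a nonempty parameter set. A soft set over $X$ is a map $F:E\to\mathcal{P}(X)$, written $(F,E)$; $\mathrm{SS}(X,E)$ denotes all soft sets. Operations ($\sqsubseteq$, soft union $\sqcup$, soft intersection $\sqcap$) are parameterwise. A soft topology is a subfamily of $\mathrm{SS}(X,E)$ containing the null soft set $\widetilde{\Phi}$ (all values $\emptyset$) and the absolute soft set $\widetilde{X}$ (all values $X$), closed under arbitrary soft unions and finite soft intersections. A soft scope function on a soft topology $\widetilde{\tau}$ is a map $\mathfrak{a}_E:X\to\widetilde{\tau}$ with $x\in\mathfrak{a}_E(x)(e)$ for all $x\in X$, $e\in E$; $(X,\widetilde{\tau},\mathfrak{a}_E,E)$ is a soft aura topological space. Soft aura-interior: $\mathrm{int}_{\mathfrak{a}}(G,E)(e)=\{x\in X:\mathfrak{a}_E(x)(e)\subseteq G(e)\}$. *)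

theory Defs
  imports Main
begin

text \<open>Soft sets over a universe X (a subset of type 'a) with parameter set E (subset of type 'e):
  maps F with F e a subset of X for e in E; outside E we normalise F e to the empty set.\<close>

definition soft_sets :: "'a set \<Rightarrow> 'e set \<Rightarrow> ('e \<Rightarrow> 'a set) set" where
  "soft_sets X E = {F. (\<forall>e\<in>E. F e \<subseteq> X) \<and> (\<forall>e. e \<notin> E \<longrightarrow> F e = {})}"

definition null_soft :: "'e set \<Rightarrow> 'e \<Rightarrow> 'a set" where
  "null_soft E = (\<lambda>e. {})"

definition absolute_soft :: "'a set \<Rightarrow> 'e set \<Rightarrow> 'e \<Rightarrow> 'a set" where
  "absolute_soft X E = (\<lambda>e. if e \<in> E then X else {})"

definition soft_Union :: "('e \<Rightarrow> 'a set) set \<Rightarrow> 'e \<Rightarrow> 'a set" where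
  "soft_Union S = (\<lambda>e. \<Union>F\<in>S. F e)"

definition soft_inter :: "('e \<Rightarrow> 'a set) \<Rightarrow> ('e \<Rightarrow> 'a set) \<Rightarrow> 'e \<Rightarrow> 'a set" where
  "soft_inter F G = (\<lambda>e. F e \<inter> G e)"

definition soft_topology :: "'a set \<Rightarrow> 'e set \<Rightarrow> ('e \<Rightarrow> 'a set) set \<Rightarrow> bool" where
  "soft_topology X E T \<longleftrightarrow>
     T \<subseteq> soft_sets X E \<and>
     null_soft E \<in> T \<and> absolute_soft X E \<in> T \<and>
     (\<forall>S. S \<subseteq> T \<longrightarrow> soft_Union S \<in> T) \<and>
     (\<forall>F G. F \<in> T \<longrightarrow> G \<in> T \<longrightarrow> soft_inter F G \<in> T)"

definition soft_scope :: "'a set \<Rightarrow> 'e set \<Rightarrow> ('e \<Rightarrow> 'a set) set \<Rightarrow> ('a \<Rightarrow> 'e \<Rightarrow> 'a set) \<Rightarrow> bool" where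
  "soft_scope X E T a \<longleftrightarrow> (\<forall>x\<in>X. a x \<in> T \<and> (\<forall>e\<in>E. x \<in> a x e))"

definition soft_aura_space :: "'a set \<Rightarrow> ('e \<Rightarrow> 'a set) set \<Rightarrow> ('a \<Rightarrow> 'e \<Rightarrow> 'a set) \<Rightarrow> 'e set \<Rightarrow> bool" where
  "soft_aura_space X T a E \<longleftrightarrow> X \<noteq> {} \<and> E \<noteq> {} \<and> soft_topology X E T \<and> soft_scope X E T a"

definition soft_aura_int :: "'a set \<Rightarrow> 'e set \<Rightarrow> ('a \<Rightarrow> 'e \<Rightarrow> 'a set) \<Rightarrow> ('e \<Rightarrow> 'a set) \<Rightarrow> 'e \<Rightarrow> 'a set" where
  "soft_aura_int X E a G = (\<lambda>e. if e \<in> E then {x\<in>X. a x e \<subseteq> G e} else {})"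

definition soft_aura_topology :: "'a set \<Rightarrow> 'e set \<Rightarrow> ('a \<Rightarrow> 'e \<Rightarrow> 'a set) \<Rightarrow> ('e \<Rightarrow> 'a set) set" where
  "soft_aura_topology X E a = {G \<in> soft_sets X E. soft_aura_int X E a G = G}"

end

theory Submission
  imports Defs
begin

text \<open>Because every point lies in its own scope, a soft set is a fixed point of the aura-interior
  exactly when it contains the scope of each of its points, parameterwise. This condition is
  pointwise in each parameter and therefore survives arbitrary unions and finite intersections.\<close>

lemma soft_Union_in_soft_sets:
  assumes "S \<subseteq> soft_sets X E"
  shows "soft_Union S \<in> soft_sets X E"
  using assms unfolding soft_sets_def soft_Union_def by blast

lemma soft_aura_space_scope_mem:
  assumes "soft_aura_space X T a E"
  shows "\<forall>x\<in>X. \<forall>e\<in>E. x \<in> a x e"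
  using assms unfolding soft_aura_space_def soft_scope_def by blast

lemma soft_aura_space_scope_subset:
  assumes "soft_aura_space X T a E"
  shows "\<forall>x\<in>X. \<forall>e\<in>E. a x e \<subseteq> X"
proof -
  have "\<forall>x\<in>X. a x \<in> T" "T \<subseteq> soft_sets X E"
    using assms unfolding soft_aura_space_def soft_scope_def soft_topology_def by auto
  then show ?thesis
    unfolding soft_sets_def by blast
qed

lemma soft_aura_topology_iff:
  assumes scope_mem: "\<forall>x\<in>X. \<forall>e\<in>E. x \<in> a x e"
  shows "G \<in> soft_aura_topology X E a \<longleftrightarrow>
    G \<in> soft_sets X E \<and> (\<forall>e\<in>E. \<forall>x\<in>G e. a x e \<subseteq> G e)"
proof -
  have "soft_aura_int X E a G = G \<longleftrightarrow> (\<forall>e\<in>E. \<forall>x\<in>G e. a x e \<subseteq> G e)"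
    if G: "G \<in> soft_sets X E"
  proof
    assume fixed: "soft_aura_int X E a G = G"
    show "\<forall>e\<in>E. \<forall>x\<in>G e. a x e \<subseteq> G e"
    proof (intro ballI)
      fix e x
      assume "e \<in> E" "x \<in> G e"
      then have "x \<in> soft_aura_int X E a G e"
        using fixed by simp
      then show "a x e \<subseteq> G e"
        using \<open>e \<in> E\<close> unfolding soft_aura_int_def by simp
    qed
  next
    assume closed: "\<forall>e\<in>E. \<forall>x\<in>G e. a x e \<subseteq> G e"
    show "soft_aura_int X E a G = G"
    proof
      fix e
      show "soft_aura_int X E a G e = G e"
        using G closed scope_mem unfolding soft_aura_int_def soft_sets_def by auto
    qed
  qed
  then show ?thesis
    unfolding soft_aura_topology_def by blast
qed

lemma null_soft_in_soft_aura_topology: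
  assumes "\<forall>x\<in>X. \<forall>e\<in>E. x \<in> a x e"
  shows "null_soft E \<in> soft_aura_topology X E a"
  unfolding soft_aura_topology_iff[OF assms] by (simp add: null_soft_def soft_sets_def)

lemma absolute_soft_in_soft_aura_topology:
  assumes "\<forall>x\<in>X. \<forall>e\<in>E. x \<in> a x e"
    and "\<forall>x\<in>X. \<forall>e\<in>E. a x e \<subseteq> X"
  shows "absolute_soft X E \<in> soft_aura_topology X E a"
  unfolding soft_aura_topology_iff[OF assms(1)]
  using assms(2) by (simp add: absolute_soft_def soft_sets_def)

lemma soft_Union_in_soft_aura_topology:
  assumes scope_mem: "\<forall>x\<in>X. \<forall>e\<in>E. x \<in> a x e"
    and "S \<subseteq> soft_aura_topology X E a"
  shows "soft_Union S \<in> soft_aura_topology X E a"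
proof -
  have S: "\<And>F. F \<in> S \<Longrightarrow> F \<in> soft_sets X E \<and> (\<forall>e\<in>E. \<forall>x\<in>F e. a x e \<subseteq> F e)"
    using assms soft_aura_topology_iff[OF scope_mem] by blast
  then have "soft_Union S \<in> soft_sets X E"
    by (blast intro: soft_Union_in_soft_sets)
  moreover have "\<forall>e\<in>E. \<forall>x\<in>soft_Union S e. a x e \<subseteq> soft_Union S e"
  proof (intro ballI)
    fix e x
    assume "e \<in> E" "x \<in> soft_Union S e"
    then obtain F where "F \<in> S" "x \<in> F e"
      unfolding soft_Union_def by blast
    then have "a x e \<subseteq> F e"
      using S \<open>e \<in> E\<close> by blast
    also have "F e \<subseteq> soft_Union S e"
      using \<open>F \<in> S\<close> unfolding soft_Union_def by blast
    finally show "a x e \<subseteq> soft_Union S e" .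
  qed
  ultimately show ?thesis
    unfolding soft_aura_topology_iff[OF scope_mem] by blast
qed

lemma soft_inter_in_soft_aura_topology:
  assumes scope_mem: "\<forall>x\<in>X. \<forall>e\<in>E. x \<in> a x e"
    and "F \<in> soft_aura_topology X E a" "G \<in> soft_aura_topology X E a"
  shows "soft_inter F G \<in> soft_aura_topology X E a"
  using assms(2,3)
  unfolding soft_aura_topology_iff[OF scope_mem] soft_inter_def soft_sets_def by auto

theorem theorem3p13:
  assumes "soft_aura_space X T a E"
  shows "soft_topology X E (soft_aura_topology X E a)"
proof -
  note scope_mem = soft_aura_space_scope_mem[OF assms]
  note scope_subset = soft_aura_space_scope_subset[OF assms]
  show ?thesis
    unfolding soft_topology_def
  proof (intro conjI allI impI)
    show "soft_aura_topology X E a \<subseteq> soft_sets X E"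
      unfolding soft_aura_topology_def by blast
    show "null_soft E \<in> soft_aura_topology X E a"
      using scope_mem by (rule null_soft_in_soft_aura_topology)
    show "absolute_soft X E \<in> soft_aura_topology X E a"
      using scope_mem scope_subset by (rule absolute_soft_in_soft_aura_topology)
    show "soft_Union S \<in> soft_aura_topology X E a"
      if "S \<subseteq> soft_aura_topology X E a" for S
      using scope_mem that by (rule soft_Union_in_soft_aura_topology)
    show "soft_inter F G \<in> soft_aura_topology X E a"
      if "F \<in> soft_aura_topology X E a" "G \<in> soft_aura_topology X E a" for F G
      using scope_mem that by (rule soft_inter_in_soft_aura_topology)
  qed
qed

end
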